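(* Consider the finite-horizon Markov decision process described in the context, with $N$ sources, $d\ge 1$ orthogonal channels, horizon $T<\infty$, transmission success probability $p\in(0,1]$ and arrival probabilities $q_1,\dots,q_N$. Let $V^*_t(x)$ be the optimal cost-to-go from epoch $t$ in state $x$ and let $V^\Delta_t(x)$ be the cost-to-go from epoch $t$ in state $x$ under the stationary policy $\pi^\Delta$. Set $$p_d := 1-(1-p)^d = p\,C_p,\qquad C_p=\sum_{l=0}^{d-1}(-1)^l\binom{d}{l+1}p^l .$$ Then there exists a sequence of non-negative functions $\{\mathcal Z_t(x)\}_{t\le T}$ on the state space such that $$V^\Delta_t(x)-V^*_t(x) = p\cdot p_d\,\mathcal Z_t(x)\quad\text{for each } t \text{ and each state } x.$$ Further there exist constants $D_1(k)$ and $D_2(k)$, $k=0,\dots,T-1$, independent of $p$, such that $$|\mathcal Z_t(x)|\le D_1(T-t)\,\|x\|_\infty + D_2(T-t),\qquad\text{where } \|x\|_\infty:=\max_{n\in\{1,\dots,N\}}\{h_n+1\}.$$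
   Context: Time is slotted, $t=1,\dots,T$. There are sources $\mathcal N=\{1,\dots,N\}$, each with a buffer of size one, and $d$ channels to a common destination. A state is $x=(\mathbf g,\mathbf h)$ with $\mathbf h=(h_1,\dots,h_N)$, $h_n$ a non-negative integer (age of information of source $n$ at the destination), and $\mathbf g=(g_1,\dots,g_N)$ with each $g_n$ either the symbol $\psi$ (source $n$ has no packet) or a non-negative integer with $g_n<h_n$ (age of the packet waiting at source $n$). Let $S_x=\{n: g_n\neq\psi\}$, $N_x=|S_x|$, $N_x^d=\min\{N_x,d\}$. At each epoch $t<T$ the admissible actions in state $x$ are the subsets $\mathbf a\subseteq S_x$ with $|\mathbf a|=N_x^d$ (so no transmission if $N_x=0$). Transitions: given state $x$ and action $\mathbf a$, each source in $\mathbf a$ is independently successfully transferred with probability $p$ (let $W\subseteq\mathbf a$ be the successful set), and independently each source $n$ receives a new packet with probability $q_n$ (let $\mathcal C$ be the set of sources receiving a new packet); all these events are independent. The next state is: $h_n'=g_n+1$ if $n\in W$, $h_n'=h_n+1$ otherwise; $g_n'=0$ if $n\in\mathcal C$; $g_n'=\psi$ if $n\in W\setminus\mathcal C$; $g_n'=g_n+1$ if $n\notin\mathcal C\cup W$ (with $\psi+1=\psi$). The per-stage cost at every epoch $t=1,\dots,T$ is $c(x)=\sum_{n=1}^N h_n$. Thus $V^*_T(x)=V^\Delta_T(x)=\sum_n h_n$, and for $t<T$, $V^*_t(x)=\min_{\mathbf a}\big[c(x)+\mathbb E[V^*_{t+1}(X')\mid x,\mathbf a]\big]$, i.e. $V^*_t(x)$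 is the minimum over all (possibly non-stationary, history-dependent) policies of the expected total cost $\mathbb E[\sum_{s=t}^T c(X(s))]$ started from $X(t)=x$; $V^\Delta_t(x)$ is the same expected total cost when actions are chosen by $\pi^\Delta$. The policy $\pi^\Delta$ uses, at every epoch $t<T$, the decision rule $d^\Delta(x)\in\arg\min_{\mathbf a}\sum_{i\in\mathbf a}(g_i-h_i)$ over admissible actions $\mathbf a$ (i.e., among sources with packets, choose the $N_x^d$ sources with largest $h_i-g_i$). *)

theory Defs
  imports Main "HOL-Library.Multiset" Complex_Main
begin

text \<open>Sources are indexed by 0..N-1. A state is a pair (g, h):
  g n = None encodes the symbol psi (no packet at source n), g n = Some a
  means a packet of age a is waiting; h n is the age of information of source n.
  Only the components n < N are meaningful.\<close>

type_synonym state = "(nat \<Rightarrow> nat option) \<times> (nat \<Rightarrow> nat)"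

definition valid_state :: "nat \<Rightarrow> state \<Rightarrow> bool" where
  "valid_state N x \<longleftrightarrow>
     (\<forall>n<N. case fst x n of None \<Rightarrow> True | Some a \<Rightarrow> a < snd x n)"

definition srcs :: "nat \<Rightarrow> state \<Rightarrow> nat set" where
  "srcs N x = {n. n < N \<and> fst x n \<noteq> None}"

definition adm :: "nat \<Rightarrow> nat \<Rightarrow> state \<Rightarrow> nat set set" where
  "adm N d x = {a. a \<subseteq> srcs N x \<and> card a = min (card (srcs N x)) d}"

definition cost :: "nat \<Rightarrow> state \<Rightarrow> real" where
  "cost N x = (\<Sum>n<N. real (snd x n))"

definition nxt :: "state \<Rightarrow> nat set \<Rightarrow> nat set \<Rightarrow> state" where
  "nxt x W C =
     ((\<lambda>n. if n \<in> C then Some 0 else if n \<in> W then None else map_option Suc (fst x n)),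
      (\<lambda>n. if n \<in> W then Suc (the (fst x n)) else Suc (snd x n)))"

definition trans_prob :: "nat \<Rightarrow> real \<Rightarrow> (nat \<Rightarrow> real) \<Rightarrow> nat set \<Rightarrow> nat set \<Rightarrow> nat set \<Rightarrow> real" where
  "trans_prob N p q a W C =
     p ^ card W * (1 - p) ^ (card a - card W)
     * (\<Prod>n\<in>C. q n) * (\<Prod>n\<in>{..<N} - C. 1 - q n)"

definition expect :: "nat \<Rightarrow> real \<Rightarrow> (nat \<Rightarrow> real) \<Rightarrow> (state \<Rightarrow> real) \<Rightarrow> state \<Rightarrow> nat set \<Rightarrow> real" where
  "expect N p q f x a =
     (\<Sum>W\<in>Pow a. \<Sum>C\<in>Pow {..<N}. trans_prob N p q a W C * f (nxt x W C))"

text \<open>Optimal cost-to-go with k epochs remaining: V*_t = Vopt (T - t) (Bellman recursion).\<close>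
fun Vopt :: "nat \<Rightarrow> nat \<Rightarrow> real \<Rightarrow> (nat \<Rightarrow> real) \<Rightarrow> nat \<Rightarrow> state \<Rightarrow> real" where
  "Vopt N d p q 0 x = cost N x"
| "Vopt N d p q (Suc k) x =
     cost N x + Min ((\<lambda>a. expect N p q (Vopt N d p q k) x a) ` adm N d x)"

fun Vpol :: "nat \<Rightarrow> real \<Rightarrow> (nat \<Rightarrow> real) \<Rightarrow> (state \<Rightarrow> nat set) \<Rightarrow> nat \<Rightarrow> state \<Rightarrow> real" where
  "Vpol N p q dr 0 x = cost N x"
| "Vpol N p q dr (Suc k) x = cost N x + expect N p q (Vpol N p q dr k) x (dr x)"

definition is_delta_action :: "nat \<Rightarrow> nat \<Rightarrow> state \<Rightarrow> nat set \<Rightarrow> bool" where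
  "is_delta_action N d x a \<longleftrightarrow> a \<in> adm N d x \<and>
     (\<forall>b\<in>adm N d x. (\<Sum>i\<in>a. int (the (fst x i)) - int (snd x i))
                     \<le> (\<Sum>i\<in>b. int (the (fst x i)) - int (snd x i)))"

definition state_norm :: "nat \<Rightarrow> state \<Rightarrow> real" where
  "state_norm N x = Max ((\<lambda>n. real (snd x n + 1)) ` {..<N})"

definition p_d :: "nat \<Rightarrow> real \<Rightarrow> real" where
  "p_d d p = 1 - (1 - p) ^ d"

definition C_p :: "nat \<Rightarrow> real \<Rightarrow> real" where
  "C_p d p = (\<Sum>l<d. (-1) ^ l * real (d choose (l + 1)) * p ^ l)"

end

theory Submission
  imports Defs
begin

text \<open>If no packet is ever delivered the ages just grow; the resulting cost-to-go
  idle_cost is the p = 0 limit of both Vopt and Vpol, and Vopt is within O(p) of it.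
  In a Bellman step an action a enters the expected cost-to-go only through the term
  -p * (sum of h_i - g_i over a), which pi^Delta minimises exactly, and through the O(p)
  remainder, on which a has an effect only when some transmission succeeds, an event of
  probability at most d * p. So each step of pi^Delta loses O(p^2) against the optimum, with
  constants affine in the state norm, and induction over the horizon gives
  0 <= Vpol - Vopt <= p^2 * (A * norm x + B). Since p <= p_d, dividing by p * p_d yields Z.\<close>

definition arrival_prob :: "nat \<Rightarrow> (nat \<Rightarrow> real) \<Rightarrow> nat set \<Rightarrow> real" where
  "arrival_prob N q C = (\<Prod>n\<in>C. q n) * (\<Prod>n\<in>{..<N} - C. 1 - q n)"

definition success_prob :: "real \<Rightarrow> nat set \<Rightarrow> nat set \<Rightarrow> real" where
  "success_prob p a W = (\<Prod>j\<in>W. p) * (\<Prod>j\<in>a - W. 1 - p)"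

lemma sum_arrival_prob: "(\<Sum>C\<in>Pow {..<N}. arrival_prob N q C) = 1"
proof -
  have "(\<Prod>n\<in>{..<N}. q n + (1 - q n)) = (\<Sum>C\<in>Pow {..<N}. arrival_prob N q C)"
    unfolding arrival_prob_def by (rule prod_add) simp
  then show ?thesis by simp
qed

lemma arrival_prob_nonneg:
  "\<forall>n<N. 0 \<le> q n \<and> q n \<le> 1 \<Longrightarrow> C \<subseteq> {..<N} \<Longrightarrow> 0 \<le> arrival_prob N q C"
  unfolding arrival_prob_def by (intro mult_nonneg_nonneg prod_nonneg) auto

lemma sum_success_prob: "finite a \<Longrightarrow> (\<Sum>W\<in>Pow a. success_prob p a W) = 1"
proof -
  assume "finite a"
  then have "(\<Prod>n\<in>a. p + (1 - p)) = (\<Sum>W\<in>Pow a. success_prob p a W)"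
    unfolding success_prob_def by (rule prod_add)
  then show ?thesis by simp
qed

lemma success_prob_nonneg: "0 \<le> p \<Longrightarrow> p \<le> 1 \<Longrightarrow> 0 \<le> success_prob p a W"
  unfolding success_prob_def by (intro mult_nonneg_nonneg prod_nonneg) auto

lemma success_prob_empty: "success_prob p a {} = (1 - p) ^ card a"
  unfolding success_prob_def by simp

lemma trans_prob_eq_success_arrival:
  "finite a \<Longrightarrow> W \<subseteq> a \<Longrightarrow> trans_prob N p q a W C = success_prob p a W * arrival_prob N q C"
  unfolding trans_prob_def arrival_prob_def success_prob_def
  by (simp add: card_Diff_subset finite_subset)

lemma sum_success_prob_member:
  assumes "finite a" "i \<in> a"
  shows "(\<Sum>W\<in>{W\<in>Pow a. i \<in> W}. success_prob p a W) = p"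
proof -
  have image: "{W\<in>Pow a. i \<in> W} = insert i ` Pow (a - {i})"
  proof
    show "{W\<in>Pow a. i \<in> W} \<subseteq> insert i ` Pow (a - {i})"
    proof
      fix W assume "W \<in> {W\<in>Pow a. i \<in> W}"
      then have "W = insert i (W - {i})" "W - {i} \<in> Pow (a - {i})" by auto
      then show "W \<in> insert i ` Pow (a - {i})" by blast
    qed
  qed (use assms in auto)
  have inj: "inj_on (insert i) (Pow (a - {i}))"
    by (rule inj_onI) (metis Diff_insert_absorb PowD subset_Diff_insert)
  have "(\<Sum>W\<in>{W\<in>Pow a. i \<in> W}. success_prob p a W)
      = (\<Sum>V\<in>Pow (a - {i}). success_prob p a (insert i V))"
    unfolding image by (rule sum.reindex[OF inj, unfolded comp_def])
  also have "\<dots> = (\<Sum>V\<in>Pow (a - {i}). p * success_prob p (a - {i}) V)"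
  proof (rule sum.cong[OF refl])
    fix V assume "V \<in> Pow (a - {i})"
    then have "i \<notin> V" "finite V" "a - insert i V = a - {i} - V"
      using assms finite_subset by auto
    then show "success_prob p a (insert i V) = p * success_prob p (a - {i}) V"
      unfolding success_prob_def by simp
  qed
  also have "\<dots> = p"
    using sum_success_prob[of "a - {i}" p] assms by (simp add: sum_distrib_left[symmetric])
  finally show ?thesis .
qed

lemma sum_success_prob_mult_sum:
  assumes "finite a"
  shows "(\<Sum>W\<in>Pow a. success_prob p a W * (\<Sum>i\<in>W. w i)) = p * (\<Sum>i\<in>a. w i)"
proof -
  have "(\<Sum>W\<in>Pow a. success_prob p a W * (\<Sum>i\<in>W. w i))
      = (\<Sum>W\<in>Pow a. \<Sum>i\<in>a. if i \<in> W then success_prob p a W * w i else 0)"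
  proof (rule sum.cong[OF refl])
    fix W assume "W \<in> Pow a"
    then have "(\<Sum>i\<in>W. w i) = (\<Sum>i\<in>a. if i \<in> W then w i else 0)"
      using assms by (simp add: sum.If_cases Int_absorb1)
    then show "success_prob p a W * (\<Sum>i\<in>W. w i)
        = (\<Sum>i\<in>a. if i \<in> W then success_prob p a W * w i else 0)"
      by (auto simp: sum_distrib_left intro!: sum.cong)
  qed
  also have "\<dots> = (\<Sum>i\<in>a. \<Sum>W\<in>{W\<in>Pow a. i \<in> W}. success_prob p a W * w i)"
    using assms by (subst sum.swap) (simp add: sum.inter_filter[symmetric])
  also have "\<dots> = (\<Sum>i\<in>a. p * w i)"
    using assms sum_success_prob_member[OF assms]
    by (intro sum.cong) (simp_all add: sum_distrib_right[symmetric])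
  finally show ?thesis by (simp add: sum_distrib_left)
qed

lemma expect_eq_success_arrival:
  "finite a \<Longrightarrow> expect N p q f x a =
     (\<Sum>W\<in>Pow a. success_prob p a W * (\<Sum>C\<in>Pow {..<N}. arrival_prob N q C * f (nxt x W C)))"
  unfolding expect_def
  by (auto simp: trans_prob_eq_success_arrival sum_distrib_left mult.assoc intro!: sum.cong)

lemma expect_diff:
  "expect N p q (\<lambda>y. f y - g y) x a = expect N p q f x a - expect N p q g x a"
  unfolding expect_def by (simp add: algebra_simps sum_subtractf)

lemma expect_const: "finite a \<Longrightarrow> expect N p q (\<lambda>y. e) x a = e"
  by (simp add: expect_eq_success_arrival sum_distrib_right[symmetric] sum_arrival_prob
      sum_success_prob)

lemma expect_affine:
  assumes "finite a"
  shows "expect N p q (\<lambda>y. c * f y + e) x a = c * expect N p q f x a + e"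
proof -
  let ?F = "\<lambda>W. \<Sum>C\<in>Pow {..<N}. arrival_prob N q C * f (nxt x W C)"
  have "expect N p q (\<lambda>y. c * f y + e) x a = (\<Sum>W\<in>Pow a. success_prob p a W *
      (c * ?F W + e * (\<Sum>C\<in>Pow {..<N}. arrival_prob N q C)))"
    unfolding expect_eq_success_arrival[OF assms]
    by (auto simp: algebra_simps sum.distrib sum_distrib_left intro!: sum.cong)
  also have "\<dots> = c * (\<Sum>W\<in>Pow a. success_prob p a W * ?F W)
      + e * (\<Sum>W\<in>Pow a. success_prob p a W)"
    by (simp add: sum_arrival_prob algebra_simps sum.distrib sum_distrib_left)
  finally show ?thesis
    using assms by (simp add: expect_eq_success_arrival sum_success_prob)
qed

lemma expect_mono:
  assumes "finite a" "0 \<le> p" "p \<le> 1" "\<forall>n<N. 0 \<le> q n \<and> q n \<le> 1"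
    and "\<And>W C. W \<subseteq> a \<Longrightarrow> C \<subseteq> {..<N} \<Longrightarrow> f (nxt x W C) \<le> g (nxt x W C)"
  shows "expect N p q f x a \<le> expect N p q g x a"
  unfolding expect_eq_success_arrival[OF assms(1)] using assms
  by (intro sum_mono mult_left_mono success_prob_nonneg)
    (auto intro!: mult_left_mono arrival_prob_nonneg)

lemma p_d_eq_mult_C_p: "p_d d p = p * C_p d p"
proof (cases d)
  case 0
  then show ?thesis by (simp add: p_d_def C_p_def)
next
  case (Suc m)
  have "(1 - p) ^ Suc m = (\<Sum>k\<le>Suc m. real (Suc m choose k) * (- p) ^ k)"
    using binomial_ring[of "- p" 1 "Suc m"] by simp
  also have "\<dots> = 1 + (\<Sum>k\<le>m. real (Suc m choose Suc k) * (- p) ^ Suc k)"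
    by (subst sum.atMost_Suc_shift) (simp del: binomial_Suc_Suc)
  also have "(\<Sum>k\<le>m. real (Suc m choose Suc k) * (- p) ^ Suc k) = - (p * C_p (Suc m) p)"
    unfolding C_p_def lessThan_Suc_atMost sum_distrib_left sum_negf[symmetric]
    by (intro sum.cong) (simp_all add: power_minus[of p] del: binomial_Suc_Suc)
  finally show ?thesis
    unfolding p_d_def Suc by simp
qed

lemma p_d_le_mult: "p \<le> 1 \<Longrightarrow> p_d m p \<le> real m * p"
  using Bernoulli_inequality[of "- p" m] by (simp add: p_d_def)

lemma le_p_d: "0 \<le> p \<Longrightarrow> p \<le> 1 \<Longrightarrow> 1 \<le> d \<Longrightarrow> p \<le> p_d d p"
  using power_decreasing[of 1 d "1 - p"] by (simp add: p_d_def)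

text \<open>If no transmission succeeds, the next state does not depend on the scheduled set.\<close>

lemma expect_close_to_no_success:
  assumes "finite a" "0 \<le> p" "p \<le> 1" "\<forall>n<N. 0 \<le> q n \<and> q n \<le> 1"
    and "\<And>W C. W \<subseteq> a \<Longrightarrow> C \<subseteq> {..<N} \<Longrightarrow> \<bar>f (nxt x W C)\<bar> \<le> M"
  shows "\<bar>expect N p q f x a
            - (1 - p) ^ card a * (\<Sum>C\<in>Pow {..<N}. arrival_prob N q C * f (nxt x {} C))\<bar>
          \<le> p_d (card a) p * M"
proof -
  define F where "F W = (\<Sum>C\<in>Pow {..<N}. arrival_prob N q C * f (nxt x W C))" for W
  have F_bound: "\<bar>F W\<bar> \<le> M" if "W \<subseteq> a" for W
  proof -
    have "\<bar>F W\<bar> \<le> (\<Sum>C\<in>Pow {..<N}. \<bar>arrival_prob N q C * f (nxt x W C)\<bar>)"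
      unfolding F_def by (rule sum_abs)
    also have "\<dots> \<le> (\<Sum>C\<in>Pow {..<N}. arrival_prob N q C * M)"
      using assms(4,5) that
      by (intro sum_mono) (auto simp: abs_mult arrival_prob_nonneg intro!: mult_left_mono)
    also have "\<dots> = M" by (simp add: sum_distrib_right[symmetric] sum_arrival_prob)
    finally show ?thesis .
  qed
  have fin: "finite (Pow a)" using assms(1) by simp
  have "expect N p q f x a
      = (1 - p) ^ card a * F {} + (\<Sum>W\<in>Pow a - {{}}. success_prob p a W * F W)"
    unfolding expect_eq_success_arrival[OF assms(1)] F_def[symmetric]
    by (subst sum.remove[OF fin, of "{}"]) (auto simp: success_prob_empty)
  then have "\<bar>expect N p q f x a - (1 - p) ^ card a * F {}\<bar>
      \<le> (\<Sum>W\<in>Pow a - {{}}. \<bar>success_prob p a W * F W\<bar>)"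
    by (simp add: sum_abs)
  also have "\<dots> \<le> (\<Sum>W\<in>Pow a - {{}}. success_prob p a W) * M"
    using F_bound assms(2,3) unfolding sum_distrib_right
    by (intro sum_mono) (auto simp: abs_mult success_prob_nonneg intro!: mult_left_mono)
  also have "(\<Sum>W\<in>Pow a - {{}}. success_prob p a W) = p_d (card a) p"
    using sum_success_prob[OF assms(1), of p] sum.remove[OF fin, of "{}" "success_prob p a"]
    by (simp add: success_prob_empty p_d_def)
  finally show ?thesis unfolding F_def .
qed

lemma expect_actions_close:
  assumes "finite a" "finite b" "card a = card b" "0 \<le> p" "p \<le> 1"
    and "\<forall>n<N. 0 \<le> q n \<and> q n \<le> 1"
    and "\<And>W C. W \<subseteq> a \<or> W \<subseteq> b \<Longrightarrow> C \<subseteq> {..<N} \<Longrightarrow> \<bar>f (nxt x W C)\<bar> \<le> M"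
  shows "\<bar>expect N p q f x a - expect N p q f x b\<bar> \<le> 2 * p_d (card a) p * M"
proof -
  let ?F0 = "\<Sum>C\<in>Pow {..<N}. arrival_prob N q C * f (nxt x {} C)"
  have "\<bar>expect N p q f x a - (1 - p) ^ card a * ?F0\<bar> \<le> p_d (card a) p * M"
    by (rule expect_close_to_no_success[OF assms(1,4-6)]) (simp add: assms(7))
  moreover have "\<bar>expect N p q f x b - (1 - p) ^ card a * ?F0\<bar> \<le> p_d (card a) p * M"
    unfolding assms(3)
    by (rule expect_close_to_no_success[OF assms(2,4-6)]) (simp add: assms(7))
  ultimately show ?thesis by linarith
qed

definition age_drop :: "state \<Rightarrow> nat \<Rightarrow> real" where
  "age_drop x i = real (snd x i) - real (the (fst x i))"

lemma finite_srcs: "finite (srcs N x)"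
  by (rule finite_subset[of _ "{..<N}"]) (auto simp: srcs_def)

lemma finite_adm: "finite (adm N d x)"
  by (rule finite_subset[of _ "Pow (srcs N x)"]) (auto simp: adm_def finite_srcs)

lemma adm_subset_srcs: "a \<in> adm N d x \<Longrightarrow> a \<subseteq> srcs N x"
  by (simp add: adm_def)

lemma card_adm_le: "a \<in> adm N d x \<Longrightarrow> card a \<le> d"
  by (simp add: adm_def)

lemma card_adm_eq: "a \<in> adm N d x \<Longrightarrow> b \<in> adm N d x \<Longrightarrow> card a = card b"
  by (simp add: adm_def)

lemma valid_state_Some_less:
  "valid_state N x \<Longrightarrow> n < N \<Longrightarrow> fst x n = Some g \<Longrightarrow> g < snd x n"
  unfolding valid_state_def by (metis option.simps(5))

lemma valid_state_nxt:
  assumes "valid_state N x" "W \<subseteq> srcs N x"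
  shows "valid_state N (nxt x W C)"
  unfolding valid_state_def
proof (intro allI impI)
  fix n assume n: "n < N"
  show "case fst (nxt x W C) n of None \<Rightarrow> True | Some a \<Rightarrow> a < snd (nxt x W C) n"
  proof (cases "fst x n")
    case None
    then show ?thesis using assms(2) unfolding nxt_def srcs_def by auto
  next
    case (Some g)
    then show ?thesis
      using valid_state_Some_less[OF assms(1) n Some] unfolding nxt_def by auto
  qed
qed

lemma age_le_state_norm: "n < N \<Longrightarrow> real (snd x n) + 1 \<le> state_norm N x"
  unfolding state_norm_def by (rule Max_ge) auto

lemma one_le_state_norm: "1 \<le> N \<Longrightarrow> 1 \<le> state_norm N x"
  using age_le_state_norm[of 0 N x] by simp

lemma state_norm_nxt_le:
  assumes "1 \<le> N" "valid_state N x" "W \<subseteq> srcs N x"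
  shows "state_norm N (nxt x W C) \<le> state_norm N x + 1"
  unfolding state_norm_def
proof (rule Max.boundedI)
  show "finite ((\<lambda>n. real (snd (nxt x W C) n + 1)) ` {..<N})" by simp
  have "0 \<in> {..<N}" using assms(1) by simp
  then show "(\<lambda>n. real (snd (nxt x W C) n + 1)) ` {..<N} \<noteq> {}" by blast
  fix r assume "r \<in> (\<lambda>n. real (snd (nxt x W C) n + 1)) ` {..<N}"
  then obtain n where n: "n < N" and r: "r = real (snd (nxt x W C) n + 1)" by auto
  have "snd (nxt x W C) n \<le> snd x n + 1"
  proof (cases "n \<in> W")
    case True
    then obtain g where "fst x n = Some g" using assms(3) unfolding srcs_def by auto
    then show ?thesis
      using True valid_state_Some_less[OF assms(2) n] unfolding nxt_def by fastforce
  qed (simp add: nxt_def)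
  then show "r \<le> Max ((\<lambda>n. real (snd x n + 1)) ` {..<N}) + 1"
    using r age_le_state_norm[OF n, of x] unfolding state_norm_def by simp
qed

lemma age_drop_bounds:
  assumes "valid_state N x" "i \<in> srcs N x"
  shows "0 \<le> age_drop x i" "age_drop x i \<le> state_norm N x"
proof -
  have i: "i < N" and "fst x i \<noteq> None" using assms(2) unfolding srcs_def by auto
  then obtain g where "fst x i = Some g" by auto
  then have "the (fst x i) < snd x i" using valid_state_Some_less[OF assms(1) i] by simp
  then show "0 \<le> age_drop x i" "age_drop x i \<le> state_norm N x"
    using age_le_state_norm[OF i, of x] unfolding age_drop_def by simp_all
qed

lemma sum_age_drop_nonneg:
  "valid_state N x \<Longrightarrow> a \<subseteq> srcs N x \<Longrightarrow> 0 \<le> sum (age_drop x) a"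
  using age_drop_bounds(1)[of N x] by (intro sum_nonneg) auto

lemma sum_age_drop_le:
  assumes "valid_state N x" "a \<in> adm N d x" "1 \<le> N"
  shows "sum (age_drop x) a \<le> real d * state_norm N x"
proof -
  have "sum (age_drop x) a \<le> (\<Sum>i\<in>a. state_norm N x)"
    using age_drop_bounds(2)[OF assms(1)] adm_subset_srcs[OF assms(2)] by (intro sum_mono) auto
  also have "\<dots> \<le> real d * state_norm N x"
    using card_adm_le[OF assms(2)] one_le_state_norm[OF assms(3), of x]
    by (simp add: mult_right_mono)
  finally show ?thesis .
qed

lemma cost_nxt:
  assumes "W \<subseteq> srcs N x"
  shows "cost N (nxt x W C) = cost N x + N - sum (age_drop x) W"
proof -
  have W: "W \<subseteq> {..<N}" using assms unfolding srcs_def by auto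
  have "cost N (nxt x W C)
      = (\<Sum>n<N. real (snd x n) + 1 - (if n \<in> W then age_drop x n else 0))"
    unfolding cost_def nxt_def age_drop_def by (auto intro!: sum.cong)
  also have "\<dots> = cost N x + N - (\<Sum>n<N. if n \<in> W then age_drop x n else 0)"
    unfolding cost_def by (simp add: sum.distrib sum_subtractf)
  also have "(\<Sum>n<N. if n \<in> W then age_drop x n else 0) = sum (age_drop x) W"
    using W by (simp add: sum.If_cases Int_absorb1)
  finally show ?thesis .
qed

lemma expect_cost:
  assumes "a \<subseteq> srcs N x"
  shows "expect N p q (cost N) x a = cost N x + N - p * sum (age_drop x) a"
proof -
  have fin: "finite a" using assms finite_srcs finite_subset by blast
  have "expect N p q (cost N) x a = (\<Sum>W\<in>Pow a. success_prob p a W *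
      ((cost N x + N) - sum (age_drop x) W))"
    unfolding expect_eq_success_arrival[OF fin]
    using assms cost_nxt[of _ N x]
    by (intro sum.cong) (auto simp: sum_distrib_right[symmetric] sum_arrival_prob)
  also have "\<dots> = (cost N x + N) * (\<Sum>W\<in>Pow a. success_prob p a W)
      - (\<Sum>W\<in>Pow a. success_prob p a W * sum (age_drop x) W)"
    by (simp add: algebra_simps sum_subtractf sum_distrib_left)
  also have "\<dots> = cost N x + N - p * sum (age_drop x) a"
    using fin by (simp add: sum_success_prob sum_success_prob_mult_sum)
  finally show ?thesis .
qed

text \<open>The cost-to-go over k remaining epochs when no packet is ever delivered.\<close>

definition idle_cost :: "nat \<Rightarrow> nat \<Rightarrow> state \<Rightarrow> real" where
  "idle_cost N k y = real (Suc k) * cost N y + real N * real k * real (Suc k) / 2"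

lemma cost_plus_expect_idle_cost:
  assumes "a \<subseteq> srcs N x"
  shows "cost N x + expect N p q (idle_cost N k) x a
    = idle_cost N (Suc k) x - real (Suc k) * p * sum (age_drop x) a"
proof -
  have fin: "finite a" using assms finite_srcs finite_subset by blast
  have "expect N p q (idle_cost N k) x a
      = real (Suc k) * expect N p q (cost N) x a + real N * real k * real (Suc k) / 2"
    unfolding idle_cost_def by (rule expect_affine[OF fin])
  then show ?thesis
    unfolding expect_cost[OF assms] idle_cost_def by (simp add: field_simps)
qed

text \<open>Coefficients of the bounds in Vopt_idle_cost_bounds and Vpol_Vopt_gap; the recursions
  absorb the growth of the state norm by at most 1 per epoch.\<close>

fun idle_gap_coeff :: "nat \<Rightarrow> nat \<Rightarrow> real" where
  "idle_gap_coeff d 0 = 0"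
| "idle_gap_coeff d (Suc k) = idle_gap_coeff d k + real (Suc k) * real d"

fun idle_gap_const :: "nat \<Rightarrow> nat \<Rightarrow> real" where
  "idle_gap_const d 0 = 0"
| "idle_gap_const d (Suc k) = idle_gap_coeff d k + idle_gap_const d k"

fun delta_gap_coeff :: "nat \<Rightarrow> nat \<Rightarrow> real" where
  "delta_gap_coeff d 0 = 0"
| "delta_gap_coeff d (Suc k) = delta_gap_coeff d k + 2 * real d * idle_gap_coeff d k"

fun delta_gap_const :: "nat \<Rightarrow> nat \<Rightarrow> real" where
  "delta_gap_const d 0 = 0"
| "delta_gap_const d (Suc k) = delta_gap_coeff d k + delta_gap_const d k
     + 2 * real d * (idle_gap_coeff d k + idle_gap_const d k)"

lemma idle_gap_coeff_nonneg: "0 \<le> idle_gap_coeff d k"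
  by (induction k) simp_all

lemma idle_gap_const_nonneg: "0 \<le> idle_gap_const d k"
  by (induction k) (simp_all add: idle_gap_coeff_nonneg)

lemma delta_gap_coeff_nonneg: "0 \<le> delta_gap_coeff d k"
  by (induction k) (simp_all add: idle_gap_coeff_nonneg)

locale delta_policy =
  fixes N d :: nat and q :: "nat \<Rightarrow> real" and dr :: "state \<Rightarrow> nat set"
  assumes N_pos: "1 \<le> N"
    and q_prob: "\<forall>n<N. 0 \<le> q n \<and> q n \<le> 1"
    and dr_delta: "\<forall>x. valid_state N x \<longrightarrow> is_delta_action N d x (dr x)"
begin

lemma dr_adm: "valid_state N x \<Longrightarrow> dr x \<in> adm N d x"
  using dr_delta unfolding is_delta_action_def by blast

lemma sum_age_drop_le_dr:
  assumes "valid_state N x" "b \<in> adm N d x"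
  shows "sum (age_drop x) b \<le> sum (age_drop x) (dr x)"
proof -
  have "(\<Sum>i\<in>dr x. int (the (fst x i)) - int (snd x i))
      \<le> (\<Sum>i\<in>b. int (the (fst x i)) - int (snd x i))"
    using dr_delta assms unfolding is_delta_action_def by blast
  then have "real_of_int (\<Sum>i\<in>dr x. int (the (fst x i)) - int (snd x i))
      \<le> real_of_int (\<Sum>i\<in>b. int (the (fst x i)) - int (snd x i))"
    by (simp only: of_int_le_iff)
  then show ?thesis
    unfolding age_drop_def by (simp add: of_int_sum sum_subtractf)
qed

lemma Vopt_Suc_argmin:
  assumes "valid_state N x"
  obtains a where "a \<in> adm N d x"
    "Vopt N d p q (Suc k) x = cost N x + expect N p q (Vopt N d p q k) x a"
    "\<And>b. b \<in> adm N d x \<Longrightarrow>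
       expect N p q (Vopt N d p q k) x a \<le> expect N p q (Vopt N d p q k) x b"
proof -
  let ?E = "\<lambda>a. expect N p q (Vopt N d p q k) x a"
  have fin: "finite (?E ` adm N d x)" using finite_adm by simp
  have "?E ` adm N d x \<noteq> {}" using dr_adm[OF assms] by blast
  then obtain a where "a \<in> adm N d x" "Min (?E ` adm N d x) = ?E a"
    using Min_in[OF fin] by auto
  then show ?thesis
    using that Min_le[OF fin] by simp
qed

lemma expect_mono_successors:
  assumes "valid_state N x" "a \<subseteq> srcs N x" "0 \<le> p" "p \<le> 1"
    and "\<And>y. valid_state N y \<Longrightarrow> state_norm N y \<le> state_norm N x + 1 \<Longrightarrow> f y \<le> g y"
  shows "expect N p q f x a \<le> expect N p q g x a"
proof (rule expect_mono[OF finite_subset[OF assms(2) finite_srcs] assms(3,4) q_prob])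
  fix W C assume "W \<subseteq> a"
  then have "W \<subseteq> srcs N x" using assms(2) by blast
  then show "f (nxt x W C) \<le> g (nxt x W C)"
    using assms(5) valid_state_nxt[OF assms(1)] state_norm_nxt_le[OF N_pos assms(1)] by blast
qed

lemma Vopt_idle_cost_bounds:
  assumes "0 \<le> p" "p \<le> 1" "valid_state N x"
  shows "idle_cost N k x - p * (idle_gap_coeff d k * state_norm N x + idle_gap_const d k)
           \<le> Vopt N d p q k x
         \<and> Vopt N d p q k x \<le> idle_cost N k x"
  using assms(3)
proof (induction k arbitrary: x)
  case 0
  then show ?case by (simp add: idle_cost_def)
next
  case (Suc k)
  let ?E = "expect N p q (Vopt N d p q k) x"
  let ?n = "state_norm N x"
  let ?K = "p * (idle_gap_coeff d k * (?n + 1) + idle_gap_const d k)"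
  obtain a where a: "a \<in> adm N d x" "Vopt N d p q (Suc k) x = cost N x + ?E a"
    and a_min: "\<And>b. b \<in> adm N d x \<Longrightarrow> ?E a \<le> ?E b"
    using Vopt_Suc_argmin[OF Suc.prems] by blast
  have dr: "dr x \<subseteq> srcs N x" using adm_subset_srcs[OF dr_adm[OF Suc.prems]] .
  have "Vopt N d p q (Suc k) x \<le> cost N x + ?E (dr x)"
    using a a_min[OF dr_adm[OF Suc.prems]] by simp
  also have "?E (dr x) \<le> expect N p q (idle_cost N k) x (dr x)"
    using Suc.IH by (intro expect_mono_successors[OF Suc.prems dr assms(1,2)]) blast
  also have "cost N x + expect N p q (idle_cost N k) x (dr x)
      = idle_cost N (Suc k) x - real (Suc k) * p * sum (age_drop x) (dr x)"
    by (rule cost_plus_expect_idle_cost[OF dr])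
  also have "\<dots> \<le> idle_cost N (Suc k) x"
    using sum_age_drop_nonneg[OF Suc.prems dr] assms(1) by simp
  finally have upper: "Vopt N d p q (Suc k) x \<le> idle_cost N (Suc k) x" by simp
  have "expect N p q (\<lambda>y. idle_cost N k y - ?K) x a \<le> ?E a"
  proof (rule expect_mono_successors[OF Suc.prems adm_subset_srcs[OF a(1)] assms(1,2)])
    fix y assume y: "valid_state N y" "state_norm N y \<le> ?n + 1"
    have "p * (idle_gap_coeff d k * state_norm N y + idle_gap_const d k) \<le> ?K"
      using y(2) assms(1) idle_gap_coeff_nonneg by (simp add: mult_left_mono)
    then show "idle_cost N k y - ?K \<le> Vopt N d p q k y"
      using Suc.IH[OF y(1)] by linarith
  qed
  then have "idle_cost N (Suc k) x - real (Suc k) * p * sum (age_drop x) a - ?K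
      \<le> Vopt N d p q (Suc k) x"
    using a cost_plus_expect_idle_cost[OF adm_subset_srcs[OF a(1)], of p q k]
      expect_diff[of N p q "idle_cost N k" "\<lambda>_. ?K" x a]
      expect_const[OF finite_subset[OF adm_subset_srcs[OF a(1)] finite_srcs]]
    by simp
  moreover have "real (Suc k) * p * sum (age_drop x) a \<le> real (Suc k) * p * (real d * ?n)"
    using sum_age_drop_le[OF Suc.prems a(1) N_pos] assms(1) by (simp add: mult_left_mono)
  ultimately have lower: "idle_cost N (Suc k) x
      - p * (idle_gap_coeff d (Suc k) * ?n + idle_gap_const d (Suc k)) \<le> Vopt N d p q (Suc k) x"
    by (simp add: algebra_simps)
  from lower upper show ?case ..
qed

text \<open>Writing Vopt = idle_cost + g with g = O(p), the rule dr is exactly optimal for the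
  idle_cost part, while the g part can change with the action only through a successful
  transmission, which has probability at most d * p.\<close>

lemma expect_Vopt_dr_le:
  assumes "0 \<le> p" "p \<le> 1" "valid_state N x" "a \<in> adm N d x"
  shows "expect N p q (Vopt N d p q k) x (dr x) \<le> expect N p q (Vopt N d p q k) x a
           + 2 * real d * p\<^sup>2 * (idle_gap_coeff d k * (state_norm N x + 1) + idle_gap_const d k)"
proof -
  let ?E = "expect N p q (Vopt N d p q k) x"
  let ?I = "expect N p q (idle_cost N k) x"
  define g where "g y = Vopt N d p q k y - idle_cost N k y" for y
  define M where "M = p * (idle_gap_coeff d k * (state_norm N x + 1) + idle_gap_const d k)"
  have dr: "dr x \<in> adm N d x" by (rule dr_adm[OF assms(3)])
  have E_split: "?E b = ?I b + expect N p q g x b" for b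
    using expect_diff[of N p q "Vopt N d p q k" "idle_cost N k" x b] by (simp add: g_def[abs_def])
  have "real (Suc k) * p * sum (age_drop x) a \<le> real (Suc k) * p * sum (age_drop x) (dr x)"
    using sum_age_drop_le_dr[OF assms(3,4)] assms(1) by (simp add: mult_left_mono)
  then have "?I (dr x) \<le> ?I a"
    using cost_plus_expect_idle_cost[OF adm_subset_srcs[OF dr], of p q k]
      cost_plus_expect_idle_cost[OF adm_subset_srcs[OF assms(4)], of p q k]
    by linarith
  moreover have "\<bar>g (nxt x W C)\<bar> \<le> M" if "W \<subseteq> dr x \<or> W \<subseteq> a" for W C
  proof -
    have "W \<subseteq> srcs N x" using that adm_subset_srcs[OF dr] adm_subset_srcs[OF assms(4)] by blast
    then have y: "valid_state N (nxt x W C)" "state_norm N (nxt x W C) \<le> state_norm N x + 1"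
      using valid_state_nxt[OF assms(3)] state_norm_nxt_le[OF N_pos assms(3)] by blast+
    have "p * (idle_gap_coeff d k * state_norm N (nxt x W C) + idle_gap_const d k) \<le> M"
      unfolding M_def using y(2) assms(1) idle_gap_coeff_nonneg by (simp add: mult_left_mono)
    then show ?thesis
      using Vopt_idle_cost_bounds[OF assms(1,2) y(1), of k] unfolding g_def by linarith
  qed
  then have "\<bar>expect N p q g x (dr x) - expect N p q g x a\<bar> \<le> 2 * p_d (card (dr x)) p * M"
    using finite_subset[OF adm_subset_srcs[OF dr] finite_srcs]
      finite_subset[OF adm_subset_srcs[OF assms(4)] finite_srcs] card_adm_eq[OF dr assms(4)]
    by (intro expect_actions_close[OF _ _ _ assms(1,2) q_prob]) auto
  moreover have "2 * p_d (card (dr x)) p * M \<le> 2 * (real d * p) * M"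
  proof -
    have "p_d (card (dr x)) p \<le> real d * p"
      using p_d_le_mult[OF assms(2), of "card (dr x)"] card_adm_le[OF dr] assms(1)
      by (meson mult_right_mono of_nat_le_iff order_trans)
    moreover have "0 \<le> M"
      unfolding M_def using assms(1) one_le_state_norm[OF N_pos, of x]
        idle_gap_coeff_nonneg[of d k] idle_gap_const_nonneg[of d k] by simp
    ultimately show ?thesis by (simp add: mult_right_mono)
  qed
  ultimately show ?thesis
    using E_split[of "dr x"] E_split[of a] unfolding M_def power2_eq_square by argo
qed

lemma Vpol_Vopt_gap:
  assumes "0 \<le> p" "p \<le> 1" "valid_state N x"
  shows "0 \<le> Vpol N p q dr k x - Vopt N d p q k x
         \<and> Vpol N p q dr k x - Vopt N d p q k x
             \<le> p\<^sup>2 * (delta_gap_coeff d k * state_norm N x + delta_gap_const d k)"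
  using assms(3)
proof (induction k arbitrary: x)
  case 0
  then show ?case by simp
next
  case (Suc k)
  let ?E = "expect N p q (Vopt N d p q k) x"
  let ?n = "state_norm N x"
  let ?B = "p\<^sup>2 * (delta_gap_coeff d k * (?n + 1) + delta_gap_const d k)"
  define D where "D y = Vpol N p q dr k y - Vopt N d p q k y" for y
  obtain a where a: "a \<in> adm N d x" "Vopt N d p q (Suc k) x = cost N x + ?E a"
    and a_min: "\<And>b. b \<in> adm N d x \<Longrightarrow> ?E a \<le> ?E b"
    using Vopt_Suc_argmin[OF Suc.prems] by blast
  have dr: "dr x \<in> adm N d x" by (rule dr_adm[OF Suc.prems])
  have fin: "finite (dr x)" using finite_subset[OF adm_subset_srcs[OF dr] finite_srcs] .
  have "Vpol N p q dr (Suc k) x - Vopt N d p q (Suc k) x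
      = expect N p q D x (dr x) + (?E (dr x) - ?E a)"
    using a(2) expect_diff[of N p q "Vpol N p q dr k" "Vopt N d p q k" x "dr x"]
    by (simp add: D_def[abs_def])
  moreover have "expect N p q (\<lambda>_. 0) x (dr x) \<le> expect N p q D x (dr x)"
    using Suc.IH unfolding D_def
    by (intro expect_mono_successors[OF Suc.prems adm_subset_srcs[OF dr] assms(1,2)]) blast
  moreover have "expect N p q D x (dr x) \<le> expect N p q (\<lambda>_. ?B) x (dr x)"
  proof (rule expect_mono_successors[OF Suc.prems adm_subset_srcs[OF dr] assms(1,2)])
    fix y assume y: "valid_state N y" "state_norm N y \<le> ?n + 1"
    have "p\<^sup>2 * (delta_gap_coeff d k * state_norm N y + delta_gap_const d k) \<le> ?B"
      using y(2) delta_gap_coeff_nonneg by (simp add: mult_left_mono)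
    then show "D y \<le> ?B" using Suc.IH[OF y(1)] unfolding D_def by linarith
  qed
  moreover have "?E a \<le> ?E (dr x)" by (rule a_min[OF dr])
  moreover note expect_Vopt_dr_le[OF assms(1,2) Suc.prems a(1), of k]
  ultimately show ?case
    using expect_const[OF fin] by (simp add: algebra_simps)
qed

end

lemma quotient_by_mult_bounds:
  fixes \<Delta> p r K :: real
  assumes "0 \<le> \<Delta>" "\<Delta> \<le> p\<^sup>2 * K" "0 < p" "p \<le> r"
  shows "0 \<le> \<Delta> / (p * r)" "\<Delta> / (p * r) \<le> K"
proof -
  have "0 < p * p" "p * p \<le> p * r" using assms(3,4) by (simp_all add: mult_left_mono)
  then have "\<Delta> / (p * r) \<le> \<Delta> / (p * p)"
    using assms(1) by (intro divide_left_mono) simp_all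
  also have "\<dots> \<le> K"
    using assms(2) \<open>0 < p * p\<close> by (simp add: pos_divide_le_eq power2_eq_square mult.commute)
  finally show "\<Delta> / (p * r) \<le> K" .
  show "0 \<le> \<Delta> / (p * r)" using assms by simp
qed

theorem theorem1:
  fixes N d T :: nat and q :: "nat \<Rightarrow> real" and dr :: "state \<Rightarrow> nat set"
  assumes "N \<ge> 1" and "d \<ge> 1"
    and "\<forall>n<N. 0 \<le> q n \<and> q n \<le> 1"
    and "\<forall>x. valid_state N x \<longrightarrow> is_delta_action N d x (dr x)"
  shows "\<exists>D1 D2 :: nat \<Rightarrow> real. \<forall>p::real. 0 < p \<and> p \<le> 1 \<longrightarrow>
           p_d d p = p * C_p d p \<and>
           (\<exists>Z :: nat \<Rightarrow> state \<Rightarrow> real. \<forall>t\<in>{1..T}. \<forall>x. valid_state N x \<longrightarrow>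
              Z t x \<ge> 0 \<and>
              Vpol N p q dr (T - t) x - Vopt N d p q (T - t) x = p * p_d d p * Z t x \<and>
              \<bar>Z t x\<bar> \<le> D1 (T - t) * state_norm N x + D2 (T - t))"
proof -
  interpret delta_policy N d q dr using assms(1,3,4) by unfold_locales
  show ?thesis
  proof (rule exI[of _ "delta_gap_coeff d"], rule exI[of _ "delta_gap_const d"], intro allI impI conjI)
    fix p :: real assume p: "0 < p \<and> p \<le> 1"
    show "p_d d p = p * C_p d p" by (rule p_d_eq_mult_C_p)
    have r: "p \<le> p_d d p" using le_p_d p assms(2) by simp
    let ?gap = "\<lambda>t x. Vpol N p q dr (T - t) x - Vopt N d p q (T - t) x"
    show "\<exists>Z. \<forall>t\<in>{1..T}. \<forall>x. valid_state N x \<longrightarrow> Z t x \<ge> 0 \<and>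
        ?gap t x = p * p_d d p * Z t x \<and>
        \<bar>Z t x\<bar> \<le> delta_gap_coeff d (T - t) * state_norm N x + delta_gap_const d (T - t)"
    proof (rule exI[of _ "\<lambda>t x. ?gap t x / (p * p_d d p)"], intro ballI allI impI conjI)
      fix t x assume "valid_state N x"
      then have gap: "0 \<le> ?gap t x" "?gap t x \<le> p\<^sup>2 * (delta_gap_coeff d (T - t) * state_norm N x
          + delta_gap_const d (T - t))"
        using Vpol_Vopt_gap[of p x "T - t"] p by auto
      have "0 < p" using p by simp
      note bounds = quotient_by_mult_bounds[OF gap this r]
      show "0 \<le> ?gap t x / (p * p_d d p)" by (rule bounds(1))
      show "\<bar>?gap t x / (p * p_d d p)\<bar>
          \<le> delta_gap_coeff d (T - t) * state_norm N x + delta_gap_const d (T - t)"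
        by (subst abs_of_nonneg[OF bounds(1)]) (rule bounds(2))
      show "?gap t x = p * p_d d p * (?gap t x / (p * p_d d p))"
        using p r by simp
    qed
  qed
qed

end
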